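(* Let $H\subset G$ be compact Lie groups with Lie algebras $\mathfrak{h}\subset\mathfrak{g}$, let $g_0$ be a bi-invariant metric on $G$, and let $\mathfrak{p}$ be the $g_0$-orthogonal complement of $\mathfrak{h}$ in $\mathfrak{g}$. Let $g$ be a $G$-invariant metric on $G/H$ with nonnegative sectional curvature, corresponding to the $\mathrm{Ad}_H$-invariant inner product $g(A,B)=g_0(\Phi A,B)$ on $\mathfrak{p}$, where $\Phi$ is a $g_0$-self-adjoint, positive definite, $\mathrm{Ad}_H$-equivariant endomorphism of $\mathfrak{p}$. For $s\in[0,1]$ let $g(s)$ be the $G$-invariant metric on $G/H$ given by $g(s)(A,B)=g_0(\Phi_sA,B)$ with $\Phi_s^{-1}=(1-s)I+s\,\Phi^{-1}$ (the inverse-linear path from $g(0)=g_0|_{\mathfrak{p}}$ to $g(1)=g$). Then $g(s)$ has nonnegative sectional curvature for every $s\in[0,1]$.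
   Context: $G$-invariant metrics on $G/H$ are identified with $\mathrm{Ad}_H$-invariant inner products on $\mathfrak{p}\cong T_H(G/H)$. A path of inner products on $\mathfrak{p}$ is called inverse-linear if the inverses of the associated self-adjoint (with respect to $g_0$) endomorphisms depend linearly on the parameter. *)

theory Defs
  imports "HOL-Analysis.Analysis"
begin

text \<open>Lie-algebraic model of a reductive homogeneous space G/H.
  The type 'g is the Lie algebra of G; its inner product is the bi-invariant
  metric g0; br is the Lie bracket; h is the Lie algebra of H;
  p is the g0-orthogonal complement of h.\<close>

definition lie_bracket :: "('g::real_vector \<Rightarrow> 'g \<Rightarrow> 'g) \<Rightarrow> bool" where
  "lie_bracket br \<longleftrightarrow> bilinear br \<and> (\<forall>X. br X X = 0) \<and>
     (\<forall>X Y Z. br X (br Y Z) + br Y (br Z X) + br Z (br X Y) = 0)"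

text \<open>Bi-invariance of g0 at the Lie algebra level: ad-invariance.\<close>
definition ad_invariant :: "('g::real_inner \<Rightarrow> 'g \<Rightarrow> 'g) \<Rightarrow> bool" where
  "ad_invariant br \<longleftrightarrow> (\<forall>X Y Z. inner (br X Y) Z = inner X (br Y Z))"

definition ortho_compl :: "'g::real_inner set \<Rightarrow> 'g set" where
  "ortho_compl h = {X. \<forall>Y\<in>h. inner X Y = 0}"

definition proj_p :: "'g::real_inner set \<Rightarrow> 'g \<Rightarrow> 'g" where
  "proj_p h X = (THE Y. Y \<in> ortho_compl h \<and> X - Y \<in> h)"

definition proj_h :: "'g::real_inner set \<Rightarrow> 'g \<Rightarrow> 'g" where
  "proj_h h X = X - proj_p h X"

definition met :: "('g::real_inner \<Rightarrow> 'g) \<Rightarrow> 'g \<Rightarrow> 'g \<Rightarrow> real" where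
  "met Phi A B = inner (Phi A) B"

definition U_tensor :: "('g::real_inner \<Rightarrow> 'g \<Rightarrow> 'g) \<Rightarrow> 'g set \<Rightarrow> ('g \<Rightarrow> 'g) \<Rightarrow> 'g \<Rightarrow> 'g \<Rightarrow> 'g" where
  "U_tensor br h Phi X Y = (THE W. W \<in> ortho_compl h \<and>
     (\<forall>Z\<in>ortho_compl h. 2 * met Phi W Z =
        met Phi (proj_p h (br Z X)) Y + met Phi X (proj_p h (br Z Y))))"

text \<open>Nomizu map of the Levi-Civita connection of the G-invariant metric:
  Lambda(X)Y = 1/2 [X,Y]_p + U(X,Y).\<close>
definition nomizu :: "('g::real_inner \<Rightarrow> 'g \<Rightarrow> 'g) \<Rightarrow> 'g set \<Rightarrow> ('g \<Rightarrow> 'g) \<Rightarrow> 'g \<Rightarrow> 'g \<Rightarrow> 'g" where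
  "nomizu br h Phi X Y = (1/2) *\<^sub>R proj_p h (br X Y) + U_tensor br h Phi X Y"

text \<open>Riemann curvature tensor at the origin (Kobayashi--Nomizu II, Ch. X):
  R(X,Y) = [Lambda X, Lambda Y] - Lambda([X,Y]_p) - ad([X,Y]_h).\<close>
definition curv :: "('g::real_inner \<Rightarrow> 'g \<Rightarrow> 'g) \<Rightarrow> 'g set \<Rightarrow> ('g \<Rightarrow> 'g) \<Rightarrow> 'g \<Rightarrow> 'g \<Rightarrow> 'g \<Rightarrow> 'g" where
  "curv br h Phi X Y Z =
     nomizu br h Phi X (nomizu br h Phi Y Z) - nomizu br h Phi Y (nomizu br h Phi X Z)
     - nomizu br h Phi (proj_p h (br X Y)) Z - br (proj_h h (br X Y)) Z"

definition sec_curv :: "('g::real_inner \<Rightarrow> 'g \<Rightarrow> 'g) \<Rightarrow> 'g set \<Rightarrow> ('g \<Rightarrow> 'g) \<Rightarrow> 'g \<Rightarrow> 'g \<Rightarrow> real" where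
  "sec_curv br h Phi X Y =
     met Phi (curv br h Phi X Y Y) X /
     (met Phi X X * met Phi Y Y - (met Phi X Y)^2)"

text \<open>Nonnegative sectional curvature of the G-invariant metric (checked at the
  origin, which suffices by homogeneity): all planes spanned by X,Y in p.\<close>
definition nonneg_sec :: "('g::real_inner \<Rightarrow> 'g \<Rightarrow> 'g) \<Rightarrow> 'g set \<Rightarrow> ('g \<Rightarrow> 'g) \<Rightarrow> bool" where
  "nonneg_sec br h Phi \<longleftrightarrow>
     (\<forall>X\<in>ortho_compl h. \<forall>Y\<in>ortho_compl h. independent {X, Y} \<and> X \<noteq> Y \<longrightarrow>
        sec_curv br h Phi X Y \<ge> 0)"

definition restr_inv :: "'g::real_vector set \<Rightarrow> ('g \<Rightarrow> 'g) \<Rightarrow> 'g \<Rightarrow> 'g" where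
  "restr_inv p f = (\<lambda>x. if x \<in> p then inv_into p f x else 0)"

definition inv_lin_path :: "'g::real_vector set \<Rightarrow> ('g \<Rightarrow> 'g) \<Rightarrow> real \<Rightarrow> 'g \<Rightarrow> 'g" where
  "inv_lin_path p Phi s = restr_inv p (\<lambda>X. (1 - s) *\<^sub>R X + s *\<^sub>R restr_inv p Phi X)"

end

theory Submission
  imports Defs
begin

(*
  Write the metric as g0(T _, _) on p and let N be the inverse of T on p.  Eliminating the
  Nomizu map, g(R(X,Y)Y,X) becomes an expression curvature_form T N X Y in brackets, T and N
  alone; nonnegative sectional curvature means that this form is nonnegative on p x p.

  Along the path, Phi_s is the inverse of L = a I + b M with M = Phi^-1, a = 1 - s, b = s.
  Evaluating at X = L x, Y = L y, the Jacobi identity gives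

    curvature_form Phi_s L (L x) (L y) = a^3/4 |[x,y]|^2 + b^3 curvature_form Phi M (M x) (M y)
        + 3/4 (a |g|^2 + b^3 <Phi E, E> - <Phi_s W, W>)

  with g = a [x,y] + b ([M x,y] + [x,M y]), E = [M x, M y]_p and W = [L x, L y]_p = a g_p + b (b E).
  The first two terms are nonnegative by hypothesis, and so is the last one, because
  W |-> <L^-1 W, W> is dominated along convex combinations: <L^-1 W, W> <= a |G|^2 + b <Phi H, H>
  whenever W = a G + b H, and |g_p| <= |g|.
*)

lemma not_independent_collinear:
  fixes X Y :: "'a::real_vector"
  assumes "\<not> (independent {X, Y} \<and> X \<noteq> Y)"
  shows "\<exists>Z\<in>{X, Y}. \<exists>c d. X = c *\<^sub>R Z \<and> Y = d *\<^sub>R Z"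
proof (cases "X = Y")
  case False
  with assms have "Y = 0 \<or> X \<in> span {Y}" by (auto simp: independent_insert)
  then show ?thesis
  proof
    assume "X \<in> span {Y}"
    then obtain c where "X = c *\<^sub>R Y" by (auto simp: span_singleton)
    then show ?thesis by (metis insertCI scaleR_one)
  qed (metis insertCI scaleR_one scaleR_zero_left)
qed (metis insertCI scaleR_one)

locale reductive_pair =
  fixes br :: "'g::euclidean_space \<Rightarrow> 'g \<Rightarrow> 'g" and h :: "'g set"
  assumes lie_bracket: "lie_bracket br"
    and ad_invariant: "ad_invariant br"
    and subspace_h: "subspace h"
    and bracket_h_h: "\<forall>X\<in>h. \<forall>Y\<in>h. br X Y \<in> h"
begin

abbreviation p :: "'g set" where "p \<equiv> ortho_compl h"

lemma bilinear_br: "bilinear br"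
  using lie_bracket by (simp add: lie_bracket_def)

lemmas br_bilinear_simps[simp] =
  bilinear_ladd[OF bilinear_br] bilinear_radd[OF bilinear_br]
  bilinear_lmul[OF bilinear_br] bilinear_rmul[OF bilinear_br]
  bilinear_lneg[OF bilinear_br] bilinear_rneg[OF bilinear_br]
  bilinear_lsub[OF bilinear_br] bilinear_rsub[OF bilinear_br]
  bilinear_lzero[OF bilinear_br] bilinear_rzero[OF bilinear_br]

lemma br_self[simp]: "br X X = 0"
  using lie_bracket by (simp add: lie_bracket_def)

lemma jacobi: "br X (br Y Z) + br Y (br Z X) + br Z (br X Y) = 0"
  using lie_bracket by (simp add: lie_bracket_def)

lemma inner_br_assoc: "inner (br X Y) Z = inner X (br Y Z)"
  using ad_invariant by (simp add: ad_invariant_def)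

lemma br_antisym: "br Y X = - br X Y"
proof -
  have "br X Y + br Y X = br (X + Y) (X + Y)"
    using br_self[of X] br_self[of Y] by (simp del: br_self)
  then have "br X Y + br Y X = 0" by simp
  then show ?thesis by (simp add: eq_neg_iff_add_eq_0 add.commute)
qed

lemma inner_br_cyclic: "inner (br A B) C = inner (br B C) A"
  by (subst inner_br_assoc) (rule inner_commute)

lemma inner_br_jacobi:
  "inner (br A B) (br x y) - inner (br A x) (br B y) = inner (br x B) (br A y)"
proof -
  have "br B (br x y) = br x (br B y) + br y (br x B)"
    using jacobi[of B x y] br_antisym[of y B] br_antisym[of B x]
    by (simp add: algebra_simps)
  moreover have "inner (br x B) (br A y) = inner A (br y (br x B))"
    by (subst inner_commute) (rule inner_br_assoc)
  ultimately show ?thesis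
    by (simp add: inner_br_assoc inner_add_right)
qed

subsection \<open>The projection onto p\<close>

lemma subspace_p: "subspace p"
  unfolding subspace_def ortho_compl_def by (auto simp: inner_add_left)

lemma p_zero[simp]: "0 \<in> p" and p_add: "a \<in> p \<Longrightarrow> b \<in> p \<Longrightarrow> a + b \<in> p"
  and p_scale: "a \<in> p \<Longrightarrow> c *\<^sub>R a \<in> p" and p_diff: "a \<in> p \<Longrightarrow> b \<in> p \<Longrightarrow> a - b \<in> p"
  using subspace_p by (auto simp: subspace_0 subspace_add subspace_scale subspace_diff)

lemma inner_p_h: "v \<in> p \<Longrightarrow> z \<in> h \<Longrightarrow> inner v z = 0"
  unfolding ortho_compl_def by auto

lemma p_inter_h: "v \<in> p \<Longrightarrow> v \<in> h \<Longrightarrow> v = 0"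
  using inner_p_h by fastforce

lemma p_complement_unique:
  assumes "Z1 \<in> p" "Z2 \<in> p" "X - Z1 \<in> h" "X - Z2 \<in> h" shows "Z1 = Z2"
proof -
  have "Z2 - Z1 \<in> h"
    using subspace_diff[OF subspace_h assms(3,4)] by simp
  moreover have "Z2 - Z1 \<in> p" using assms(1,2) by (rule p_diff[rotated])
  ultimately have "Z2 - Z1 = 0" by (rule p_inter_h[rotated])
  then show ?thesis by simp
qed

lemma proj_p_characterization: "proj_p h X \<in> p \<and> X - proj_p h X \<in> h"
proof -
  have span_h: "span h = h" using subspace_h by (simp add: span_eq_iff)
  obtain Y Z where "Y \<in> span h" "\<And>w. w \<in> span h \<Longrightarrow> orthogonal Z w" "X = Y + Z"
    using orthogonal_subspace_decomp_exists[of h X] by blast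
  then have "Z \<in> p \<and> X - Z \<in> h" by (auto simp: span_h ortho_compl_def orthogonal_def)
  then have "\<exists>!Z. Z \<in> p \<and> X - Z \<in> h" using p_complement_unique by blast
  then show ?thesis unfolding proj_p_def by (rule theI')
qed

lemma proj_p_in[simp]: "proj_p h X \<in> p"
  and proj_h_in: "X - proj_p h X \<in> h"
  using proj_p_characterization by blast+

lemma proj_p_unique: "Y \<in> p \<Longrightarrow> X - Y \<in> h \<Longrightarrow> proj_p h X = Y"
  using p_complement_unique[OF proj_p_in _ proj_h_in] by blast

lemma proj_p_id: "Y \<in> p \<Longrightarrow> proj_p h Y = Y"
  by (rule proj_p_unique) (auto simp: subspace_0[OF subspace_h])

lemma proj_p_add[simp]: "proj_p h (X + Y) = proj_p h X + proj_p h Y"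
proof (rule proj_p_unique)
  have "X + Y - (proj_p h X + proj_p h Y) = (X - proj_p h X) + (Y - proj_p h Y)" by simp
  then show "X + Y - (proj_p h X + proj_p h Y) \<in> h"
    using subspace_add[OF subspace_h proj_h_in proj_h_in] by metis
qed (simp add: p_add)

lemma proj_p_scale[simp]: "proj_p h (c *\<^sub>R X) = c *\<^sub>R proj_p h X"
proof (rule proj_p_unique)
  have "c *\<^sub>R X - c *\<^sub>R proj_p h X = c *\<^sub>R (X - proj_p h X)" by (simp add: algebra_simps)
  then show "c *\<^sub>R X - c *\<^sub>R proj_p h X \<in> h"
    using subspace_scale[OF subspace_h proj_h_in] by metis
qed (simp add: p_scale)

lemma proj_p_zero[simp]: "proj_p h 0 = 0"
  using proj_p_scale[of 0 0] by simp

lemma proj_p_neg[simp]: "proj_p h (- X) = - proj_p h X"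
  using proj_p_scale[of "- 1" X] by simp

lemma proj_p_diff[simp]: "proj_p h (X - Y) = proj_p h X - proj_p h Y"
  using proj_p_add[of X "- Y"] by simp

lemma inner_proj_p_left: "Y \<in> p \<Longrightarrow> inner (proj_p h X) Y = inner X Y"
  using inner_p_h[OF _ proj_h_in, of Y X] by (simp add: inner_diff_right inner_commute)

lemma inner_proj_p_right: "Y \<in> p \<Longrightarrow> inner Y (proj_p h X) = inner Y X"
  using inner_proj_p_left by (simp add: inner_commute)

lemma inner_proj_p_self_le: "inner (proj_p h X) (proj_p h X) \<le> inner X X"
proof -
  have "inner X X = inner (proj_p h X) (proj_p h X) + inner (X - proj_p h X) (X - proj_p h X)"
    using inner_p_h[OF proj_p_in proj_h_in, of X X]
    by (simp add: inner_diff_left inner_diff_right inner_commute)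
  then show ?thesis by simp
qed

lemma br_h_p:
  assumes "Z \<in> h" and "X \<in> p" shows "br Z X \<in> p"
proof -
  have "inner (br Z X) Y = 0" if "Y \<in> h" for Y
  proof -
    have "inner (br Z X) Y = - inner X (br Z Y)"
      by (simp add: br_antisym[of Z X] inner_br_assoc)
    then show ?thesis using assms bracket_h_h that inner_p_h by simp
  qed
  then show ?thesis by (simp add: ortho_compl_def)
qed

subsection \<open>Invariant inner products as endomorphisms of p\<close>

definition endo_p :: "('g \<Rightarrow> 'g) \<Rightarrow> bool" where
  "endo_p T \<longleftrightarrow> (\<forall>X\<in>p. T X \<in> p) \<and> (\<forall>X\<in>p. \<forall>Y\<in>p. T (X + Y) = T X + T Y) \<and>
     (\<forall>X\<in>p. \<forall>c. T (c *\<^sub>R X) = c *\<^sub>R T X)"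

definition self_adjoint_p :: "('g \<Rightarrow> 'g) \<Rightarrow> bool" where
  "self_adjoint_p T \<longleftrightarrow> (\<forall>X\<in>p. \<forall>Y\<in>p. inner (T X) Y = inner X (T Y))"

definition positive_p :: "('g \<Rightarrow> 'g) \<Rightarrow> bool" where
  "positive_p T \<longleftrightarrow> (\<forall>X\<in>p. X \<noteq> 0 \<longrightarrow> 0 < inner (T X) X)"

definition equivariant_h :: "('g \<Rightarrow> 'g) \<Rightarrow> bool" where
  "equivariant_h T \<longleftrightarrow> (\<forall>Z\<in>h. \<forall>X\<in>p. T (br Z X) = br Z (T X))"

definition metric_endo :: "('g \<Rightarrow> 'g) \<Rightarrow> bool" where
  "metric_endo T \<longleftrightarrow> endo_p T \<and> self_adjoint_p T \<and> positive_p T \<and> equivariant_h T"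

definition inverse_on_p :: "('g \<Rightarrow> 'g) \<Rightarrow> ('g \<Rightarrow> 'g) \<Rightarrow> bool" where
  "inverse_on_p T N \<longleftrightarrow> (\<forall>X\<in>p. T X \<in> p \<and> N X \<in> p \<and> T (N X) = X \<and> N (T X) = X)"

lemma endo_p_in: "endo_p T \<Longrightarrow> X \<in> p \<Longrightarrow> T X \<in> p"
  and endo_p_add: "endo_p T \<Longrightarrow> X \<in> p \<Longrightarrow> Y \<in> p \<Longrightarrow> T (X + Y) = T X + T Y"
  and endo_p_scale: "endo_p T \<Longrightarrow> X \<in> p \<Longrightarrow> T (c *\<^sub>R X) = c *\<^sub>R T X"
  by (simp_all add: endo_p_def)

lemma endo_p_zero: "endo_p T \<Longrightarrow> T 0 = 0"
  using endo_p_scale[of T 0 0] by simp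

lemma endo_p_diff: "endo_p T \<Longrightarrow> X \<in> p \<Longrightarrow> Y \<in> p \<Longrightarrow> T (X - Y) = T X - T Y"
  using endo_p_add[of T X "- Y"] endo_p_scale[of T Y "- 1"] p_scale[of Y "- 1"] by simp

lemma positive_p_nonneg: "endo_p T \<Longrightarrow> positive_p T \<Longrightarrow> X \<in> p \<Longrightarrow> 0 \<le> inner (T X) X"
  by (cases "X = 0") (auto simp: positive_p_def endo_p_zero less_imp_le)

lemma inverse_on_p_sym: "inverse_on_p T N \<Longrightarrow> inverse_on_p N T"
  by (auto simp: inverse_on_p_def)

lemma positive_p_kernel: "positive_p T \<Longrightarrow> X \<in> p \<Longrightarrow> T X = 0 \<Longrightarrow> X = 0"
  by (auto simp: positive_p_def)

(* T is extended to an injective, hence surjective, linear map of the whole space by the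
   identity on h. *)
lemma positive_p_onto:
  assumes T: "endo_p T" and pos: "positive_p T" and Y: "Y \<in> p"
  shows "Y \<in> T ` p"
proof -
  define T' where "T' X = T (proj_p h X) + (X - proj_p h X)" for X
  have "linear T'"
    by (rule linearI) (simp_all add: T'_def endo_p_add[OF T] endo_p_scale[OF T] algebra_simps)
  moreover have "inj T'"
  proof (rule linear_injective_0[OF \<open>linear T'\<close>, THEN iffD2], intro allI impI)
    fix X assume "T' X = 0"
    then have "T (proj_p h X) = - (X - proj_p h X)" by (metis T'_def eq_neg_iff_add_eq_0)
    moreover have "- (X - proj_p h X) \<in> h" using subspace_neg[OF subspace_h proj_h_in] .
    ultimately have "T (proj_p h X) \<in> h" by simp
    then have "T (proj_p h X) = 0" using p_inter_h endo_p_in[OF T] proj_p_in by blast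
    moreover from this have "proj_p h X = 0" by (rule positive_p_kernel[OF pos proj_p_in])
    ultimately show "X = 0" using \<open>T' X = 0\<close> by (simp add: T'_def)
  qed
  ultimately obtain X where X: "T' X = Y"
    by (metis linear_injective_imp_surjective surjD)
  then have "X - proj_p h X = Y - T (proj_p h X)" by (simp add: T'_def algebra_simps)
  moreover have "Y - T (proj_p h X) \<in> p" using Y endo_p_in[OF T] by (simp add: p_diff)
  ultimately have "X - proj_p h X = 0" using p_inter_h proj_h_in by metis
  then have "T (proj_p h X) = Y" using X by (simp add: T'_def)
  then show ?thesis using proj_p_in by blast
qed

lemma inverse_on_p_restr_inv:
  assumes T: "endo_p T" and pos: "positive_p T"
  shows "inverse_on_p T (restr_inv p T)"
proof -
  have "inj_on T p"
    by (rule inj_onI)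
      (metis T endo_p_diff positive_p_kernel[OF pos] p_diff eq_iff_diff_eq_0)
  then show ?thesis
    unfolding inverse_on_p_def restr_inv_def using endo_p_in[OF T] positive_p_onto[OF T pos]
    by (auto intro: inv_into_into f_inv_into_f inv_into_f_f)
qed

lemma endo_p_inverse:
  assumes TN: "inverse_on_p T N" and T: "endo_p T" shows "endo_p N"
proof -
  have inv: "\<And>X. X \<in> p \<Longrightarrow> T X \<in> p \<and> N X \<in> p \<and> T (N X) = X \<and> N (T X) = X"
    using TN by (simp add: inverse_on_p_def)
  have "N (X + Y) = N X + N Y" if "X \<in> p" "Y \<in> p" for X Y
    using inv[of "N X + N Y"] inv that endo_p_add[OF T] p_add by metis
  moreover have "N (c *\<^sub>R X) = c *\<^sub>R N X" if "X \<in> p" for X c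
    using inv[of "c *\<^sub>R N X"] inv that endo_p_scale[OF T] p_scale by metis
  ultimately show ?thesis using inv by (simp add: endo_p_def)
qed

lemma self_adjoint_p_inverse:
  assumes TN: "inverse_on_p T N" and T: "self_adjoint_p T" shows "self_adjoint_p N"
  unfolding self_adjoint_p_def
proof (intro ballI)
  fix X Y assume "X \<in> p" "Y \<in> p"
  then have NX: "N X \<in> p" "T (N X) = X" and NY: "N Y \<in> p" "T (N Y) = Y"
    using TN by (auto simp: inverse_on_p_def)
  have "inner (N X) Y = inner (N X) (T (N Y))" using NY by simp
  also have "\<dots> = inner (T (N X)) (N Y)" using T NX(1) NY(1) by (metis self_adjoint_p_def)
  finally show "inner (N X) Y = inner X (N Y)" using NX by simp
qed

lemma positive_p_inverse:
  assumes TN: "inverse_on_p T N" and T: "endo_p T" "positive_p T" shows "positive_p N"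
  unfolding positive_p_def
proof (intro ballI impI)
  fix X assume X: "X \<in> p" "X \<noteq> 0"
  then have "N X \<in> p" "N X \<noteq> 0" "T (N X) = X"
    using TN endo_p_zero[OF T(1)] by (auto simp: inverse_on_p_def)
  then show "0 < inner (N X) X"
    using T(2) unfolding positive_p_def by (metis inner_commute)
qed

lemma equivariant_h_inverse:
  assumes TN: "inverse_on_p T N" and T: "equivariant_h T" shows "equivariant_h N"
  unfolding equivariant_h_def
proof (intro ballI)
  fix Z X assume "Z \<in> h" "X \<in> p"
  then have "T (br Z (N X)) = br Z X" "br Z (N X) \<in> p" "br Z X \<in> p"
    using T TN br_h_p by (auto simp: equivariant_h_def inverse_on_p_def)
  then show "N (br Z X) = br Z (N X)"
    using TN by (metis inverse_on_p_def)
qed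

lemma metric_endo_inverse: "metric_endo T \<Longrightarrow> inverse_on_p T N \<Longrightarrow> metric_endo N"
  unfolding metric_endo_def
  using endo_p_inverse self_adjoint_p_inverse positive_p_inverse equivariant_h_inverse by blast

lemma br_skew_in_p:
  assumes M: "self_adjoint_p M" "equivariant_h M" and x: "x \<in> p" and y: "y \<in> p"
  shows "br (M x) y - br x (M y) \<in> p"
proof -
  have "inner (br (M x) y) z = inner (br x (M y)) z" if z: "z \<in> h" for z
  proof -
    have "inner (br (M x) y) z = - inner (M x) (br z y)"
      by (simp add: inner_br_assoc br_antisym[of y z])
    also have "\<dots> = - inner x (br z (M y))"
      using M x br_h_p[OF z y] z y by (simp add: self_adjoint_p_def equivariant_h_def)
    also have "\<dots> = inner (br x (M y)) z"
      by (simp add: inner_br_assoc br_antisym[of "M y" z])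
    finally show ?thesis .
  qed
  then show ?thesis by (simp add: ortho_compl_def inner_diff_left)
qed

lemma br_apply_self_in_p:
  assumes "self_adjoint_p M" "equivariant_h M" and "y \<in> p"
  shows "br (M y) y \<in> p"
proof -
  have "br (M y) y = (1/2) *\<^sub>R (br (M y) y - br y (M y))"
    by (simp add: br_antisym[of y "M y"])
  then show ?thesis using br_skew_in_p[OF assms assms(3)] p_scale by metis
qed

subsection \<open>Curvature\<close>

(* N stands for the inverse of T on p. *)
definition curvature_form :: "('g \<Rightarrow> 'g) \<Rightarrow> ('g \<Rightarrow> 'g) \<Rightarrow> 'g \<Rightarrow> 'g \<Rightarrow> real" where
  "curvature_form T N X Y =
     (1/4) * inner (N (proj_p h (br X (T Y) + br Y (T X)))) (br X (T Y) + br Y (T X))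
     - inner (N (proj_p h (br Y (T Y)))) (br X (T X))
     - (3/4) * inner (T (proj_p h (br X Y))) (proj_p h (br X Y))
     + (1/2) * inner (br X Y) (br X (T Y) - br Y (T X))"

context
  fixes T N :: "'g \<Rightarrow> 'g"
  assumes metric_T: "metric_endo T" and inverse_TN: "inverse_on_p T N"
begin

lemma T_endo: "endo_p T" and N_endo: "endo_p N"
  using metric_T endo_p_inverse[OF inverse_TN] by (auto simp: metric_endo_def)

lemma T_in: "X \<in> p \<Longrightarrow> T X \<in> p" and N_in: "X \<in> p \<Longrightarrow> N X \<in> p"
  and T_N: "X \<in> p \<Longrightarrow> T (N X) = X"
  using inverse_TN by (simp_all add: inverse_on_p_def)

lemma T_self_adjoint: "X \<in> p \<Longrightarrow> Y \<in> p \<Longrightarrow> inner (T X) Y = inner X (T Y)"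
  using metric_T by (simp add: metric_endo_def self_adjoint_p_def)

lemma N_self_adjoint: "X \<in> p \<Longrightarrow> Y \<in> p \<Longrightarrow> inner (N X) Y = inner X (N Y)"
  using metric_T self_adjoint_p_inverse[OF inverse_TN]
  by (simp add: metric_endo_def self_adjoint_p_def)

lemma T_positive: "X \<in> p \<Longrightarrow> X \<noteq> 0 \<Longrightarrow> 0 < inner (T X) X"
  using metric_T by (simp add: metric_endo_def positive_p_def)

lemma T_equivariant: "Z \<in> h \<Longrightarrow> X \<in> p \<Longrightarrow> T (br Z X) = br Z (T X)"
  using metric_T by (simp add: metric_endo_def equivariant_h_def)

lemma U_tensor_eqI:
  assumes U: "U \<in> p"
    and U_spec: "\<And>Z. Z \<in> p \<Longrightarrow>
      2 * met T U Z = met T (proj_p h (br Z X)) Y + met T X (proj_p h (br Z Y))"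
  shows "U_tensor br h T X Y = U"
  unfolding U_tensor_def
proof (rule the_equality)
  fix W assume W_spec: "W \<in> p \<and> (\<forall>Z\<in>p. 2 * met T W Z =
        met T (proj_p h (br Z X)) Y + met T X (proj_p h (br Z Y)))"
  then have W: "W \<in> p" by blast
  have "inner (T W) Z = inner (T U) Z" if "Z \<in> p" for Z
    using W_spec[THEN conjunct2, rule_format, OF that] U_spec[OF that] by (simp add: met_def)
  then have "inner (T (W - U)) (W - U) = 0"
    using W U p_diff by (simp add: endo_p_diff[OF T_endo] inner_diff_left)
  then have "W - U = 0" using T_positive[OF p_diff[OF W U]] by force
  then show "W = U" by simp
qed (use U U_spec in blast)

lemma U_tensor_formula:
  assumes X: "X \<in> p" and Y: "Y \<in> p"
  shows "U_tensor br h T X Y = (1/2) *\<^sub>R N (proj_p h (br X (T Y) + br Y (T X)))"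
proof (rule U_tensor_eqI)
  define S where "S = br X (T Y) + br Y (T X)"
  show "(1/2) *\<^sub>R N (proj_p h S) \<in> p" by (simp add: N_in p_scale)
  fix Z assume Z: "Z \<in> p"
  have "met T (proj_p h (br Z X)) Y = inner (proj_p h (br Z X)) (T Y)"
    using T_self_adjoint[OF proj_p_in Y] by (simp add: met_def)
  also have "\<dots> = inner (br Z X) (T Y)"
    using T_in[OF Y] by (simp add: inner_proj_p_left)
  also have "\<dots> = inner (br X (T Y)) Z"
    by (metis inner_br_assoc inner_commute)
  finally have 1: "met T (proj_p h (br Z X)) Y = inner (br X (T Y)) Z" .
  have "met T X (proj_p h (br Z Y)) = inner (br Z Y) (T X)"
    using T_in[OF X] by (simp add: met_def inner_proj_p_right inner_commute)
  also have "\<dots> = inner (br Y (T X)) Z"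
    by (metis inner_br_assoc inner_commute)
  finally have 2: "met T X (proj_p h (br Z Y)) = inner (br Y (T X)) Z" .
  have "T ((1/2) *\<^sub>R N (proj_p h S)) = (1/2) *\<^sub>R proj_p h S"
    by (simp add: endo_p_scale[OF T_endo] N_in T_N del: proj_p_add)
  then show "2 * met T ((1/2) *\<^sub>R N (proj_p h S)) Z
      = met T (proj_p h (br Z X)) Y + met T X (proj_p h (br Z Y))"
    unfolding 1 2 using Z by (simp add: met_def inner_proj_p_left S_def inner_add_left del: proj_p_add)
qed

lemma nomizu_formula:
  "X \<in> p \<Longrightarrow> Y \<in> p \<Longrightarrow> nomizu br h T X Y =
     (1/2) *\<^sub>R proj_p h (br X Y) + (1/2) *\<^sub>R N (proj_p h (br X (T Y) + br Y (T X)))"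
  by (simp add: nomizu_def U_tensor_formula del: proj_p_add)

lemma nomizu_in: "X \<in> p \<Longrightarrow> Y \<in> p \<Longrightarrow> nomizu br h T X Y \<in> p"
  by (simp add: nomizu_formula N_in p_add p_scale del: proj_p_add)

lemma nomizu_self: "X \<in> p \<Longrightarrow> nomizu br h T X X = N (proj_p h (br X (T X)))"
  by (simp add: nomizu_formula scaleR_2[symmetric] endo_p_scale[OF N_endo] del: proj_p_add)

lemma inner_nomizu:
  assumes "A \<in> p" "B \<in> p" "C \<in> p"
  shows "inner (nomizu br h T A B) (T C) =
     (1/2) * (inner (br A B) (T C) + inner (br A (T B)) C + inner (br B (T A)) C)"
proof -
  let ?S = "proj_p h (br A (T B) + br B (T A))"
  have "inner (N ?S) (T C) = inner ?S C"
    using T_self_adjoint[OF N_in[OF proj_p_in] \<open>C \<in> p\<close>] by (simp add: T_N del: proj_p_add)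
  then show ?thesis
    using assms by (simp add: nomizu_formula inner_add_left inner_proj_p_left T_in del: proj_p_add)
qed

lemma inner_nomizu_skew:
  assumes "A \<in> p" "B \<in> p" "C \<in> p"
  shows "inner (nomizu br h T A B) (T C) = - inner (nomizu br h T A C) (T B)"
proof -
  have "inner (br A B) (T C) = - inner (br A (T C)) B"
    by (simp add: inner_br_assoc br_antisym[of B "T C"])
  moreover have "inner (br A (T B)) C = - inner (br A C) (T B)"
    by (simp add: inner_br_assoc br_antisym[of C "T B"])
  moreover have "inner (br B (T A)) C = - inner (br C (T A)) B"
    by (simp only: inner_br_cyclic[of B "T A" C] br_antisym[of "T A" C] inner_minus_left)
  ultimately show ?thesis using assms by (simp add: inner_nomizu algebra_simps)
qed

lemma inner_h_br_antisym:
  assumes Z: "Z \<in> h" and X: "X \<in> p" and Y: "Y \<in> p"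
  shows "inner Z (br X (T Y)) = - inner Z (br Y (T X))"
proof -
  have "inner Z (br X (T Y)) = inner (T (br Z X)) Y"
    using T_self_adjoint[OF br_h_p[OF Z X] Y] by (simp add: inner_br_assoc)
  also have "\<dots> = - inner (br Z Y) (T X)"
    using T_equivariant[OF Z X] by (simp add: inner_br_assoc br_antisym[of "T X" Y])
  finally show ?thesis by (simp add: inner_br_assoc)
qed

lemma inner_nomizu_nomizu_self:
  assumes X: "X \<in> p" and Y: "Y \<in> p"
  shows "inner (nomizu br h T X (nomizu br h T Y Y)) (T X)
    = - inner (N (proj_p h (br Y (T Y)))) (br X (T X))"
proof -
  have "inner (nomizu br h T X (nomizu br h T Y Y)) (T X)
      = - inner (N (proj_p h (br X (T X)))) (proj_p h (br Y (T Y)))"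
    using inner_nomizu_skew[OF X nomizu_in[OF Y Y] X] by (simp add: nomizu_self X Y T_N)
  moreover have "inner (N (proj_p h A)) (proj_p h B) = inner (N (proj_p h B)) A" for A B
    using N_self_adjoint[OF proj_p_in proj_p_in, of A B] N_in[OF proj_p_in, of B]
    by (simp add: inner_proj_p_left inner_commute)
  ultimately show ?thesis by simp
qed

lemma inner_nomizu_nomizu:
  assumes X: "X \<in> p" and Y: "Y \<in> p"
  defines "W \<equiv> proj_p h (br X Y)" and "S \<equiv> br X (T Y) + br Y (T X)"
  shows "inner (nomizu br h T Y (nomizu br h T X Y)) (T X)
    = (1/4) * inner (T W) W - (1/4) * inner (N (proj_p h S)) S"
proof -
  define U where "U = (1/2) *\<^sub>R N (proj_p h S)"
  have W: "W \<in> p" and U: "U \<in> p" by (simp_all add: W_def U_def N_in p_scale)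
  have XY: "nomizu br h T X Y = (1/2) *\<^sub>R W + U"
    and YX: "nomizu br h T Y X = - (1/2) *\<^sub>R W + U"
    using X Y by (simp_all add: nomizu_formula W_def U_def S_def br_antisym[of Y X] add.commute
        del: proj_p_add)
  have "inner (nomizu br h T Y (nomizu br h T X Y)) (T X)
      = - inner (nomizu br h T Y X) (T (nomizu br h T X Y))"
    by (rule inner_nomizu_skew[OF Y nomizu_in[OF X Y] X])
  also have "\<dots> = (1/4) * inner (T W) W - inner U (T U)"
    using T_self_adjoint[OF U W] W U
    by (simp add: XY YX endo_p_add[OF T_endo] endo_p_scale[OF T_endo] p_scale
        inner_add_left inner_add_right inner_commute algebra_simps)
  moreover have "T U = (1/2) *\<^sub>R proj_p h S"
    by (simp add: U_def endo_p_scale[OF T_endo] N_in T_N del: proj_p_add)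
  then have "inner U (T U) = (1/4) * inner (N (proj_p h S)) S"
    by (simp add: U_def inner_proj_p_right N_in del: proj_p_add)
  ultimately show ?thesis by simp
qed

lemma inner_nomizu_proj_p_plus_br_proj_h:
  assumes X: "X \<in> p" and Y: "Y \<in> p"
  defines "W \<equiv> proj_p h (br X Y)" and "Zh \<equiv> proj_h h (br X Y)"
  shows "inner (nomizu br h T W Y) (T X) + inner (br Zh Y) (T X)
    = (1/2) * inner (br X Y) (br Y (T X) - br X (T Y)) + (1/2) * inner (T W) W"
proof -
  have W: "W \<in> p" and Zh: "Zh \<in> h" by (simp_all add: W_def Zh_def proj_h_def proj_h_in)
  have "inner (br Y (T W)) X = inner (T W) (br X Y)"
    by (subst inner_br_cyclic) (rule inner_br_assoc)
  also have "\<dots> = inner (T W) W"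
    using T_in[OF W] by (simp add: W_def inner_proj_p_right)
  finally have "inner (nomizu br h T W Y) (T X)
      = (1/2) * inner W (br Y (T X) - br X (T Y)) + (1/2) * inner (T W) W"
    using W X Y
    by (simp add: inner_nomizu inner_br_assoc br_antisym[of X "T Y"] inner_diff_right inner_add_right)
  moreover have "inner (br Zh Y) (T X) = (1/2) * inner Zh (br Y (T X) - br X (T Y))"
    using inner_h_br_antisym[OF Zh X Y] by (simp add: inner_br_assoc inner_diff_right)
  moreover have "br X Y = W + Zh" by (simp add: W_def Zh_def proj_h_def)
  ultimately show ?thesis by (simp add: inner_add_left)
qed

lemma met_curv_eq_curvature_form:
  assumes X: "X \<in> p" and Y: "Y \<in> p"
  shows "met T (curv br h T X Y Y) X = curvature_form T N X Y"
proof -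
  let ?\<Lambda> = "nomizu br h T"
  define W where "W = proj_p h (br X Y)"
  define Zh where "Zh = proj_h h (br X Y)"
  have curv_eq: "curv br h T X Y Y = ?\<Lambda> X (?\<Lambda> Y Y) - ?\<Lambda> Y (?\<Lambda> X Y) - ?\<Lambda> W Y - br Zh Y"
    by (simp only: curv_def W_def Zh_def)
  have "curv br h T X Y Y \<in> p"
    unfolding curv_eq using X Y by (intro p_diff nomizu_in br_h_p) (simp_all add: W_def Zh_def
        proj_h_def proj_h_in)
  then have "met T (curv br h T X Y Y) X = inner (curv br h T X Y Y) (T X)"
    using T_self_adjoint[OF _ X] by (simp add: met_def)
  also have "\<dots> = inner (?\<Lambda> X (?\<Lambda> Y Y)) (T X) - inner (?\<Lambda> Y (?\<Lambda> X Y)) (T X)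
      - (inner (?\<Lambda> W Y) (T X) + inner (br Zh Y) (T X))"
    by (simp add: curv_eq inner_diff_left)
  also have "\<dots> = curvature_form T N X Y"
    unfolding W_def Zh_def inner_nomizu_nomizu_self[OF X Y] inner_nomizu_nomizu[OF X Y]
      inner_nomizu_proj_p_plus_br_proj_h[OF X Y]
    by (simp add: curvature_form_def inner_diff_right algebra_simps)
  finally show ?thesis .
qed

lemma curvature_form_collinear:
  assumes Z: "Z \<in> p" shows "curvature_form T N (c *\<^sub>R Z) (d *\<^sub>R Z) = 0"
proof -
  have "br (c *\<^sub>R Z) (T (d *\<^sub>R Z)) + br (d *\<^sub>R Z) (T (c *\<^sub>R Z)) = (2 * c * d) *\<^sub>R br Z (T Z)"
    using Z by (simp add: endo_p_scale[OF T_endo] scaleR_left_distrib[symmetric])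
  then show ?thesis
    using Z by (simp add: curvature_form_def endo_p_scale[OF T_endo] endo_p_scale[OF N_endo]
        power2_eq_square del: proj_p_add)
qed

lemma met_gram_pos:
  assumes X: "X \<in> p" and Y: "Y \<in> p" and indep: "independent {X, Y}" and "X \<noteq> Y"
  shows "0 < met T X X * met T Y Y - (met T X Y)^2"
proof -
  have "Y \<noteq> 0" using indep dependent_zero by blast
  then have b: "0 < met T Y Y" using T_positive[OF Y] by (simp add: met_def)
  define t where "t = met T X Y / met T Y Y"
  have "X \<notin> span {Y}"
    using indep \<open>X \<noteq> Y\<close> by (simp add: independent_insert)
  then have "X - t *\<^sub>R Y \<noteq> 0" by (metis eq_iff_diff_eq_0 span_base span_scale singletonI)
  then have "0 < met T (X - t *\<^sub>R Y) (X - t *\<^sub>R Y)"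
    using T_positive[OF p_diff[OF X p_scale[OF Y]]] by (simp add: met_def)
  also have "met T (X - t *\<^sub>R Y) (X - t *\<^sub>R Y) = met T X X - 2 * t * met T X Y + t^2 * met T Y Y"
    using X Y T_self_adjoint[OF X Y] p_scale[OF Y]
    by (simp add: met_def endo_p_diff[OF T_endo] endo_p_scale[OF T_endo] inner_diff_left
        inner_diff_right inner_commute power2_eq_square algebra_simps)
  also have "\<dots> = (met T X X * met T Y Y - (met T X Y)^2) / met T Y Y"
    using b by (simp add: t_def field_simps power2_eq_square)
  finally show ?thesis using b by (simp add: zero_less_divide_iff)
qed

lemma nonneg_sec_iff_curvature_form:
  "nonneg_sec br h T \<longleftrightarrow> (\<forall>X\<in>p. \<forall>Y\<in>p. 0 \<le> curvature_form T N X Y)"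
proof
  assume nonneg: "nonneg_sec br h T"
  show "\<forall>X\<in>p. \<forall>Y\<in>p. 0 \<le> curvature_form T N X Y"
  proof (intro ballI)
    fix X Y assume X: "X \<in> p" and Y: "Y \<in> p"
    show "0 \<le> curvature_form T N X Y"
    proof (cases "independent {X, Y} \<and> X \<noteq> Y")
      case True
      then have "0 \<le> sec_curv br h T X Y" using nonneg X Y by (simp add: nonneg_sec_def)
      then show ?thesis using met_gram_pos[OF X Y] True
        by (simp add: sec_curv_def met_curv_eq_curvature_form[OF X Y] zero_le_divide_iff)
    next
      case False
      then obtain Z c d where "Z \<in> p" "X = c *\<^sub>R Z" "Y = d *\<^sub>R Z"
        using not_independent_collinear X Y by blast
      then show ?thesis by (simp add: curvature_form_collinear)
    qed
  qed
next
  assume "\<forall>X\<in>p. \<forall>Y\<in>p. 0 \<le> curvature_form T N X Y"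
  then show "nonneg_sec br h T"
    using met_gram_pos
    by (simp add: nonneg_sec_def sec_curv_def met_curv_eq_curvature_form less_imp_le)
qed

lemma curvature_form_inverse:
  assumes x: "x \<in> p" and y: "y \<in> p"
  shows "curvature_form T N (N x) (N y) =
     (1/4) * inner (N (br (N x) y - br x (N y))) (br (N x) y - br x (N y))
     - inner (N (br (N y) y)) (br (N x) x)
     - (3/4) * inner (T (proj_p h (br (N x) (N y)))) (proj_p h (br (N x) (N y)))
     + (1/2) * inner (br (N x) (N y)) (br (N x) y + br x (N y))"
proof -
  have N: "self_adjoint_p N" "equivariant_h N"
    using metric_endo_inverse[OF metric_T inverse_TN] by (simp_all add: metric_endo_def)
  have "br (N x) y + br (N y) x = br (N x) y - br x (N y)"
    and "br (N x) y - br (N y) x = br (N x) y + br x (N y)"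
    by (simp_all add: br_antisym[of "N y" x])
  moreover have "br (N x) y - br x (N y) \<in> p" and "br (N y) y \<in> p"
    using br_skew_in_p[OF N x y] br_apply_self_in_p[OF N y] .
  ultimately show ?thesis
    by (simp add: curvature_form_def x y T_N proj_p_id del: proj_p_add proj_p_diff)
qed

end

subsection \<open>The inverse-linear path\<close>

definition id_comb :: "('g \<Rightarrow> 'g) \<Rightarrow> real \<Rightarrow> real \<Rightarrow> 'g \<Rightarrow> 'g" where
  "id_comb M a b X = a *\<^sub>R X + b *\<^sub>R M X"

(* In the notation of the theorem: P = Phi, M = Phi^-1, a = 1 - s, b = s, L = Phi_s^-1, Psi = Phi_s. *)
context
  fixes P M :: "'g \<Rightarrow> 'g" and a b :: real
  assumes metric_P: "metric_endo P" and inverse_PM: "inverse_on_p P M"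
    and a: "0 \<le> a" and b: "0 \<le> b" and ab: "0 < a + b"
begin

abbreviation L :: "'g \<Rightarrow> 'g" where "L \<equiv> id_comb M a b"

abbreviation Psi :: "'g \<Rightarrow> 'g" where "Psi \<equiv> restr_inv p L"

lemma metric_M: "metric_endo M"
  by (rule metric_endo_inverse[OF metric_P inverse_PM])

lemma metric_L: "metric_endo L"
proof -
  have M: "endo_p M" "self_adjoint_p M" "positive_p M" "equivariant_h M"
    using metric_M by (simp_all add: metric_endo_def)
  have "endo_p L"
    using M(1) by (simp add: endo_p_def id_comb_def p_add p_scale algebra_simps)
  moreover have "self_adjoint_p L"
    using M(2) by (simp add: self_adjoint_p_def id_comb_def inner_add_left inner_add_right)
  moreover have "positive_p L"
    unfolding positive_p_def
  proof (intro ballI impI)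
    fix X assume "X \<in> p" "X \<noteq> 0"
    then have "0 < inner X X" "0 < inner (M X) X" using M(3) by (simp_all add: positive_p_def)
    then have "0 < a * inner X X + b * inner (M X) X"
      using a b ab by (cases "a = 0") (auto intro: add_pos_nonneg)
    then show "0 < inner (L X) X" by (simp add: id_comb_def inner_add_left)
  qed
  moreover have "equivariant_h L"
    using M(4) by (simp add: equivariant_h_def id_comb_def)
  ultimately show ?thesis by (simp add: metric_endo_def)
qed

lemma endo_L: "endo_p L"
  using metric_L by (simp add: metric_endo_def)

lemma inverse_L_Psi: "inverse_on_p L Psi"
  using metric_L inverse_on_p_restr_inv by (simp add: metric_endo_def)

lemma metric_Psi: "metric_endo Psi"
  by (rule metric_endo_inverse[OF metric_L inverse_L_Psi])

(* Convexity of W |-> <L^-1 W, W> (with w = L^-1 W), by completing the square. *)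
lemma inner_inverse_path_le:
  assumes w: "w \<in> p" and G: "G \<in> p" and H: "H \<in> p" and Lw: "L w = a *\<^sub>R G + b *\<^sub>R H"
  shows "inner w (L w) \<le> a * inner G G + b * inner (P H) H"
proof -
  have Mw: "M w \<in> p" "P (M w) = w" using w inverse_PM by (simp_all add: inverse_on_p_def)
  have "inner (P H) (M w) = inner H w"
    using T_self_adjoint[OF metric_P inverse_PM H Mw(1)] Mw(2) by simp
  then have "inner w (L w) + a * inner (G - w) (G - w) + b * inner (P (H - M w)) (H - M w)
      = a * inner G G + b * inner (P H) H + 2 * inner w (L w) - 2 * inner w (a *\<^sub>R G + b *\<^sub>R H)"
    using H Mw by (simp add: id_comb_def endo_p_diff[OF T_endo[OF metric_P inverse_PM]] inner_diff_left
        inner_diff_right inner_add_right inner_commute algebra_simps)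
  also have "\<dots> = a * inner G G + b * inner (P H) H" by (simp add: Lw)
  finally have "inner w (L w) + a * inner (G - w) (G - w) + b * inner (P (H - M w)) (H - M w)
      = a * inner G G + b * inner (P H) H" .
  moreover have "0 \<le> a * inner (G - w) (G - w)" using a by simp
  moreover have "0 \<le> b * inner (P (H - M w)) (H - M w)"
    using b positive_p_nonneg[of P "H - M w"] metric_P p_diff[OF H Mw(1)]
    by (simp add: metric_endo_def)
  ultimately show ?thesis by linarith
qed

lemma curvature_form_at_L:
  assumes x: "x \<in> p" and y: "y \<in> p"
  shows "curvature_form Psi L (L x) (L y)
    = (1/4) * b^2 * inner (L (br (M x) y - br x (M y))) (br (M x) y - br x (M y))
      - b^2 * inner (L (br (M y) y)) (br (M x) x)
      - (3/4) * inner (Psi (proj_p h (br (L x) (L y)))) (proj_p h (br (L x) (L y)))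
      + (1/2) * inner (br (L x) (L y)) ((2 * a) *\<^sub>R br x y + b *\<^sub>R (br (M x) y + br x (M y)))"
proof -
  define f where "f = br (M x) y - br x (M y)"
  define v where "v = br (M y) y"
  have M: "self_adjoint_p M" "equivariant_h M" using metric_M by (simp_all add: metric_endo_def)
  have f: "f \<in> p" and v: "v \<in> p"
    unfolding f_def v_def using br_skew_in_p[OF M x y] br_apply_self_in_p[OF M y] .
  have S: "br (L x) y - br x (L y) = b *\<^sub>R f"
    by (simp add: id_comb_def f_def algebra_simps)
  have U: "br (L x) x = b *\<^sub>R br (M x) x" and V: "br (L y) y = b *\<^sub>R v"
    by (simp_all add: id_comb_def v_def)
  have "br (L x) y + br x (L y) = (a *\<^sub>R br x y + a *\<^sub>R br x y) + b *\<^sub>R (br (M x) y + br x (M y))"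
    by (simp add: id_comb_def algebra_simps)
  also have "a *\<^sub>R br x y + a *\<^sub>R br x y = (2 * a) *\<^sub>R br x y" by (metis mult_2 scaleR_left_distrib)
  finally have D: "br (L x) y + br x (L y) = (2 * a) *\<^sub>R br x y + b *\<^sub>R (br (M x) y + br x (M y))" .
  have "curvature_form Psi L (L x) (L y)
      = (1/4) * inner (L (b *\<^sub>R f)) (b *\<^sub>R f) - inner (L (b *\<^sub>R v)) (b *\<^sub>R br (M x) x)
        - (3/4) * inner (Psi (proj_p h (br (L x) (L y)))) (proj_p h (br (L x) (L y)))
        + (1/2) * inner (br (L x) (L y)) ((2 * a) *\<^sub>R br x y + b *\<^sub>R (br (M x) y + br x (M y)))"
    using curvature_form_inverse[OF metric_Psi inverse_on_p_sym[OF inverse_L_Psi] x y]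
    by (simp only: S U V D)
  then show ?thesis
    unfolding endo_p_scale[OF endo_L f] endo_p_scale[OF endo_L v]
    by (simp add: f_def v_def power2_eq_square)
qed

lemma curvature_form_path:
  assumes x: "x \<in> p" and y: "y \<in> p"
  defines "g \<equiv> a *\<^sub>R br x y + b *\<^sub>R (br (M x) y + br x (M y))"
    and "E \<equiv> proj_p h (br (M x) (M y))"
    and "W \<equiv> proj_p h (br (L x) (L y))"
  shows "curvature_form Psi L (L x) (L y) = (1/4) * a^3 * inner (br x y) (br x y)
      + b^3 * curvature_form P M (M x) (M y)
      + (3/4) * (a * inner g g + b^3 * inner (P E) E - inner (Psi W) W)"
proof -
  define c where "c = br x y"
  define a1 where "a1 = br (M x) y"
  define a2 where "a2 = br x (M y)"
  define e where "e = br (M x) (M y)"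
  define u where "u = br (M x) x"
  define v where "v = br (M y) y"
  have B: "br (L x) (L y) = a^2 *\<^sub>R c + (a * b) *\<^sub>R (a1 + a2) + b^2 *\<^sub>R e"
    by (simp add: id_comb_def c_def a1_def a2_def e_def algebra_simps power2_eq_square)
  have L_side: "curvature_form Psi L (L x) (L y)
      = (1/4) * b^2 * inner (L (a1 - a2)) (a1 - a2) - b^2 * inner (L v) u
        - (3/4) * inner (Psi W) W + (1/2) * inner (br (L x) (L y)) ((2 * a) *\<^sub>R c + b *\<^sub>R (a1 + a2))"
    unfolding curvature_form_at_L[OF x y] W_def c_def a1_def a2_def u_def v_def ..
  have "proj_p h e = E" by (simp add: E_def e_def)
  then have P_side: "curvature_form P M (M x) (M y) = (1/4) * inner (M (a1 - a2)) (a1 - a2)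
      - inner (M v) u - (3/4) * inner (P E) E + (1/2) * inner e (a1 + a2)"
    using curvature_form_inverse[OF metric_P inverse_PM x y]
    by (simp only: a1_def[symmetric] a2_def[symmetric] u_def[symmetric] v_def[symmetric]
        e_def[symmetric])
  have jacobi: "inner e c - inner u v = inner a2 a1"
    unfolding e_def c_def u_def v_def a1_def a2_def by (rule inner_br_jacobi)
  have g: "g = a *\<^sub>R c + b *\<^sub>R (a1 + a2)" by (simp add: g_def c_def a1_def a2_def)
  \<comment> \<open>the expansions differ exactly by the Jacobi defect\<close>
  have "curvature_form Psi L (L x) (L y) - ((1/4) * a^3 * inner (br x y) (br x y)
      + b^3 * curvature_form P M (M x) (M y)
      + (3/4) * (a * inner g g + b^3 * inner (P E) E - inner (Psi W) W))
      = a * b^2 * (inner e c - inner u v - inner a2 a1)"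
    unfolding L_side P_side g c_def[symmetric] B
    by (simp add: id_comb_def inner_add_left inner_add_right inner_diff_left inner_diff_right
        inner_commute power2_eq_square power3_eq_cube algebra_simps)
  then show ?thesis using jacobi by simp
qed

lemma curvature_form_path_nonneg:
  assumes nonneg: "nonneg_sec br h P" and x: "x \<in> p" and y: "y \<in> p"
  shows "0 \<le> curvature_form Psi L (L x) (L y)"
proof -
  define g where "g = a *\<^sub>R br x y + b *\<^sub>R (br (M x) y + br x (M y))"
  define E where "E = proj_p h (br (M x) (M y))"
  define W where "W = proj_p h (br (L x) (L y))"
  define w where "w = Psi W"
  have E: "E \<in> p" and W: "W \<in> p" by (simp_all add: E_def W_def)
  have w: "w \<in> p" and Lw: "L w = W"
    using W inverse_L_Psi by (simp_all add: w_def inverse_on_p_def)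
  have "W = a *\<^sub>R proj_p h g + b *\<^sub>R (b *\<^sub>R E)"
    by (simp add: W_def g_def E_def id_comb_def algebra_simps power2_eq_square)
  then have "inner w W \<le> a * inner (proj_p h g) (proj_p h g) + b * inner (P (b *\<^sub>R E)) (b *\<^sub>R E)"
    using inner_inverse_path_le[OF w proj_p_in p_scale[OF E]] Lw by simp
  also have "\<dots> \<le> a * inner g g + b^3 * inner (P E) E"
    using inner_proj_p_self_le[of g] a E endo_p_scale[OF T_endo[OF metric_P inverse_PM]]
    by (simp add: mult_left_mono power3_eq_cube)
  finally have "inner (Psi W) W \<le> a * inner g g + b^3 * inner (P E) E"
    by (simp add: w_def)
  moreover have "0 \<le> curvature_form P M (M x) (M y)"
    using nonneg nonneg_sec_iff_curvature_form[OF metric_P inverse_PM] x y inverse_PM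
    by (simp add: inverse_on_p_def)
  ultimately show ?thesis
    unfolding curvature_form_path[OF x y] g_def[symmetric] E_def[symmetric] W_def[symmetric]
    using a b by (simp add: mult_nonneg_nonneg)
qed

lemma nonneg_sec_path:
  assumes "nonneg_sec br h P" shows "nonneg_sec br h Psi"
  unfolding nonneg_sec_iff_curvature_form[OF metric_Psi inverse_on_p_sym[OF inverse_L_Psi]]
proof (intro ballI)
  fix X Y assume "X \<in> p" "Y \<in> p"
  then have "Psi X \<in> p" "Psi Y \<in> p" "L (Psi X) = X" "L (Psi Y) = Y"
    using inverse_L_Psi by (simp_all add: inverse_on_p_def)
  then show "0 \<le> curvature_form Psi L X Y"
    using curvature_form_path_nonneg[OF assms, of "Psi X" "Psi Y"] by simp
qed

end

end

theorem proposition1p1: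
  fixes br :: "'g::euclidean_space \<Rightarrow> 'g \<Rightarrow> 'g"
    and h :: "'g set"
    and Phi :: "'g \<Rightarrow> 'g"
  assumes lie: "lie_bracket br"
    and biinv: "ad_invariant br"
    and h_sub: "subspace h"
    and h_alg: "\<forall>X\<in>h. \<forall>Y\<in>h. br X Y \<in> h"
    and Phi_lin: "linear Phi"
    and Phi_p: "\<forall>X\<in>ortho_compl h. Phi X \<in> ortho_compl h"
    and Phi_sa: "\<forall>X\<in>ortho_compl h. \<forall>Y\<in>ortho_compl h. inner (Phi X) Y = inner X (Phi Y)"
    and Phi_pos: "\<forall>X\<in>ortho_compl h. X \<noteq> 0 \<longrightarrow> inner (Phi X) X > 0"
    and Phi_equiv: "\<forall>Z\<in>h. \<forall>X\<in>ortho_compl h. Phi (br Z X) = br Z (Phi X)"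
    and nonneg: "nonneg_sec br h Phi"
  shows "\<forall>s\<in>{0..1::real}. nonneg_sec br h (inv_lin_path (ortho_compl h) Phi s)"
proof
  fix s :: real assume s: "s \<in> {0..1}"
  interpret reductive_pair br h
    using lie biinv h_sub h_alg by unfold_locales
  have metric_Phi: "metric_endo Phi"
    using Phi_p Phi_sa Phi_pos Phi_equiv linear_add[OF Phi_lin] linear_scale[OF Phi_lin]
    by (simp add: metric_endo_def endo_p_def self_adjoint_p_def positive_p_def equivariant_h_def)
  then have "inverse_on_p Phi (restr_inv p Phi)"
    by (simp add: metric_endo_def inverse_on_p_restr_inv)
  then have "nonneg_sec br h (restr_inv p (id_comb (restr_inv p Phi) (1 - s) s))"
    using nonneg_sec_path[OF metric_Phi _ _ _ _ nonneg] s by simp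
  then show "nonneg_sec br h (inv_lin_path p Phi s)"
    by (simp add: inv_lin_path_def id_comb_def[abs_def])
qed

end
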